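(* Consider smoothed W3DM-$(p,q)$ with parameter $n$, where each triple weight $w(T)$, $T\in[n]^3$, is drawn independently from a distribution with density $f_T:[0,1]\to[0,\phi]$. Then the expected maximum number of iterations of local search under the $(p,q)$-neighbourhood (over all initial matchings and all improving sequences) is $O(n^{6p+6}\phi)$.
   Context: W3DM-$(p,q)$: given $n$ and weights $w:[n]^3\to\mathbb R$, a 3-dimensional matching is a set $S\subseteq[n]^3$ of $n$ triples $(T_1,T_2,T_3)$ such that for each coordinate $k\in\{1,2,3\}$ and each $i\in[n]$ some $T\in S$ has $T_k=i$ (call coordinates 1,2,3 boys, girls, homes). Its weight is $\sum_{T\in S}w(T)$. The $(p,q)$-neighbours of $S$ are the matchings obtained by replacing at most $p$ triples of $S$ by the same number of other triples, such that at most $q$ boys or girls are relocated to new homes. A solution is a matching with no neighbour of strictly larger weight; local search repeatedly moves to a strictly better neighbour. *)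

theory Defs
  imports "HOL-Probability.Probability"
begin

type_synonym triple = "nat \<times> nat \<times> nat"

text \<open>[n] is rendered as {0..<n}. Coordinates: boy = fst, girl = fst o snd, home = snd o snd.\<close>

definition triples :: "nat \<Rightarrow> triple set" where
  "triples n = {0..<n} \<times> {0..<n} \<times> {0..<n}"

definition is_3dm :: "nat \<Rightarrow> triple set \<Rightarrow> bool" where
  "is_3dm n S \<longleftrightarrow> S \<subseteq> triples n \<and> card S = n \<and>
     (\<forall>i<n. (\<exists>T\<in>S. fst T = i) \<and> (\<exists>T\<in>S. fst (snd T) = i) \<and> (\<exists>T\<in>S. snd (snd T) = i))"

definition matching_weight :: "(triple \<Rightarrow> real) \<Rightarrow> triple set \<Rightarrow> real" where
  "matching_weight w S = (\<Sum>T\<in>S. w T)"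

definition relocated_boys :: "triple set \<Rightarrow> triple set \<Rightarrow> nat set" where
  "relocated_boys S S' = {b. \<exists>g h. (b, g, h) \<in> S' \<and> \<not> (\<exists>g'. (b, g', h) \<in> S)}"

definition relocated_girls :: "triple set \<Rightarrow> triple set \<Rightarrow> nat set" where
  "relocated_girls S S' = {g. \<exists>b h. (b, g, h) \<in> S' \<and> \<not> (\<exists>b'. (b', g, h) \<in> S)}"

definition pq_neighbour :: "nat \<Rightarrow> nat \<Rightarrow> nat \<Rightarrow> triple set \<Rightarrow> triple set \<Rightarrow> bool" where
  "pq_neighbour n p q S S' \<longleftrightarrow> is_3dm n S' \<and> card (S - S') \<le> p \<and> card (S' - S) = card (S - S') \<and>
     card (relocated_boys S S') + card (relocated_girls S S') \<le> q"

definition improving_run :: "nat \<Rightarrow> nat \<Rightarrow> nat \<Rightarrow> (triple \<Rightarrow> real) \<Rightarrow> (nat \<Rightarrow> triple set) \<Rightarrow> nat \<Rightarrow> bool" where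
  "improving_run n p q w ss k \<longleftrightarrow> is_3dm n (ss 0) \<and>
     (\<forall>i<k. pq_neighbour n p q (ss i) (ss (Suc i)) \<and>
            matching_weight w (ss i) < matching_weight w (ss (Suc i)))"

definition max_iterations :: "nat \<Rightarrow> nat \<Rightarrow> nat \<Rightarrow> (triple \<Rightarrow> real) \<Rightarrow> nat" where
  "max_iterations n p q w = Max {k. \<exists>ss. improving_run n p q w ss k}"

definition smoothed_weights :: "nat \<Rightarrow> (triple \<Rightarrow> real \<Rightarrow> real) \<Rightarrow> (triple \<Rightarrow> real) measure" where
  "smoothed_weights n f = PiM (triples n) (\<lambda>T. density lborel (\<lambda>x. ennreal (f T x)))"

definition valid_density :: "real \<Rightarrow> (real \<Rightarrow> real) \<Rightarrow> bool" where
  "valid_density \<phi> g \<longleftrightarrow> g \<in> borel_measurable borel \<and>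
     (\<forall>x. 0 \<le> g x \<and> g x \<le> \<phi>) \<and> (\<forall>x. x \<notin> {0..1} \<longrightarrow> g x = 0) \<and>
     (\<integral>\<^sup>+ x. ennreal (g x) \<partial>lborel) = 1"

end

theory Submission
  imports Defs
begin

text \<open>
  A step of local search exchanges a set A of at most p triples for a disjoint nonempty set B of
  at most p triples and increases the weight by the gain w(B) - w(A). For a fixed triple T in B
  the gain is w(T) plus a quantity independent of w(T), so it falls into (0, \<epsilon>] with
  probability at most \<phi> \<epsilon>; a union bound over the at most ((p+1) n^(3p))^2 moves bounds
  the probability that some move has its gain in (0, \<epsilon>]. Otherwise every step gains more
  than \<epsilon>, while the weight of a matching stays in [0, n], so there are at most n/\<epsilon> steps.
  A run never revisits a matching, hence has fewer than 2^(n^3) steps, and summing over the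
  dyadic scales \<epsilon> = n/2^j, j < n^3, bounds the expected number of steps by
  1 + n^4 \<phi> ((p+1) n^(3p))^2.
\<close>

section \<open>Moves and improving runs\<close>

definition gain :: "'i set \<Rightarrow> 'i set \<Rightarrow> ('i \<Rightarrow> real) \<Rightarrow> real" where
  "gain A B w = (\<Sum>T\<in>B. w T) - (\<Sum>T\<in>A. w T)"

definition moves :: "nat \<Rightarrow> nat \<Rightarrow> (triple set \<times> triple set) set" where
  "moves n p = {(A, B). A \<subseteq> triples n \<and> B \<subseteq> triples n \<and> A \<inter> B = {} \<and> B \<noteq> {} \<and>
                        card A \<le> p \<and> card B \<le> p}"

lemma finite_triples [simp]: "finite (triples n)"
  by (simp add: triples_def)

lemma card_triples: "card (triples n) = n ^ 3"
  by (simp add: triples_def card_cartesian_product power3_eq_cube)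

lemma finite_moves: "finite (moves n p)"
proof -
  have "moves n p \<subseteq> Pow (triples n) \<times> Pow (triples n)"
    by (auto simp: moves_def)
  then show ?thesis
    by (rule finite_subset) simp
qed

lemma card_moves_le:
  assumes "1 \<le> n"
  shows "card (moves n p) \<le> ((p + 1) * n ^ (3 * p)) ^ 2"
proof -
  define Ls where "Ls = {xs. set xs \<subseteq> triples n \<and> length xs \<le> p}"
  have short_list: "\<exists>xs\<in>Ls. set xs = A" if "A \<subseteq> triples n" "card A \<le> p" for A
  proof -
    have "finite A"
      using that(1) by (rule finite_subset) simp
    then obtain xs where "set xs = A" "distinct xs"
      using finite_distinct_list by blast
    then show ?thesis
      using that distinct_card[of xs] unfolding Ls_def by auto
  qed
  have finite_Ls: "finite Ls"
    unfolding Ls_def by (intro finite_lists_length_le) simp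
  have "moves n p \<subseteq> (\<lambda>(xs, ys). (set xs, set ys)) ` (Ls \<times> Ls)"
  proof
    fix m assume "m \<in> moves n p"
    then obtain A B where m: "m = (A, B)" and A: "A \<subseteq> triples n" "card A \<le> p"
      and B: "B \<subseteq> triples n" "card B \<le> p"
      unfolding moves_def by blast
    obtain xs ys where "xs \<in> Ls" "ys \<in> Ls" "set xs = A" "set ys = B"
      using short_list[OF A] short_list[OF B] by blast
    then show "m \<in> (\<lambda>(xs, ys). (set xs, set ys)) ` (Ls \<times> Ls)"
      unfolding m by (auto intro!: image_eqI[of _ _ "(xs, ys)"])
  qed
  then have "card (moves n p) \<le> card ((\<lambda>(xs, ys). (set xs, set ys)) ` (Ls \<times> Ls))"
    using finite_Ls by (intro card_mono) auto
  also have "\<dots> \<le> card (Ls \<times> Ls)"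
    by (rule card_image_le) (simp add: finite_Ls)
  also have "\<dots> = card Ls ^ 2"
    by (simp add: card_cartesian_product power2_eq_square)
  also have "\<dots> \<le> ((p + 1) * n ^ (3 * p)) ^ 2"
  proof (rule power_mono)
    have "card Ls = (\<Sum>i\<le>p. (n ^ 3) ^ i)"
      unfolding Ls_def by (simp add: card_lists_length_le card_triples)
    also have "\<dots> \<le> (\<Sum>i\<le>p. (n ^ 3) ^ p)"
      using assms by (intro sum_mono power_increasing) auto
    also have "\<dots> = (p + 1) * n ^ (3 * p)"
      by (simp add: power_mult)
    finally show "card Ls \<le> (p + 1) * n ^ (3 * p)" .
  qed simp
  finally show ?thesis .
qed

lemma is_3dm_finite: "is_3dm n S \<Longrightarrow> finite S"
  unfolding is_3dm_def using finite_subset finite_triples by blast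

lemma matching_weight_diff:
  assumes "finite S" "finite S'"
  shows "matching_weight w S' - matching_weight w S = gain (S - S') (S' - S) w"
  using sum.Int_Diff[OF assms(1), of w S'] sum.Int_Diff[OF assms(2), of w S]
  unfolding matching_weight_def gain_def by (simp add: Int_commute)

lemma improving_step_is_move:
  assumes "is_3dm n S" "pq_neighbour n p q S S'" "matching_weight w S < matching_weight w S'"
  shows "(S - S', S' - S) \<in> moves n p"
    and "matching_weight w S' - matching_weight w S = gain (S - S') (S' - S) w"
proof -
  have S': "is_3dm n S'" and card_le: "card (S - S') \<le> p" "card (S' - S) \<le> p"
    and card_eq: "card (S' - S) = card (S - S')"
    using assms(2) by (auto simp: pq_neighbour_def)
  have fin: "finite S" "finite S'"
    using assms(1) S' is_3dm_finite by auto
  show "matching_weight w S' - matching_weight w S = gain (S - S') (S' - S) w"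
    using matching_weight_diff[OF fin] .
  have "S' - S \<noteq> {}"
  proof
    assume "S' - S = {}"
    with card_eq fin have "S = S'"
      by auto
    with assms(3) show False
      by simp
  qed
  then show "(S - S', S' - S) \<in> moves n p"
    using card_le assms(1) S' unfolding moves_def is_3dm_def by auto
qed

lemma improving_run_is_3dm:
  assumes "improving_run n p q w ss k" "i \<le> k"
  shows "is_3dm n (ss i)"
  using assms(2)
proof (induction i)
  case 0
  then show ?case
    using assms(1) by (simp add: improving_run_def)
next
  case (Suc i)
  then show ?case
    using assms(1) by (simp add: improving_run_def pq_neighbour_def)
qed

lemma improving_run_weight_less:
  assumes "improving_run n p q w ss k" "i < j" "j \<le> k"
  shows "matching_weight w (ss i) < matching_weight w (ss j)"
  using assms(2,3)
proof (induction j)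
  case 0
  then show ?case by simp
next
  case (Suc j)
  have "matching_weight w (ss j) < matching_weight w (ss (Suc j))"
    using assms(1) Suc.prems by (simp add: improving_run_def)
  then show ?case
    using Suc by (cases "i = j") auto
qed

lemma improving_run_length_less:
  assumes "improving_run n p q w ss k"
  shows "k < 2 ^ (n ^ 3)"
proof -
  have "inj_on ss {..k}"
    using improving_run_weight_less[OF assms]
    by (intro inj_onI) (metis atMost_iff less_irrefl linorder_neqE_nat)
  moreover have "ss ` {..k} \<subseteq> Pow (triples n)"
    using improving_run_is_3dm[OF assms] by (auto simp: is_3dm_def)
  ultimately have "card {..k} \<le> card (Pow (triples n))"
    by (metis card_image card_mono finite_Pow_iff finite_triples)
  then show ?thesis
    by (simp add: card_Pow card_triples)
qed

lemma matching_weight_bounds: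
  assumes "is_3dm n S" "\<forall>T\<in>triples n. w T \<in> {0..1}"
  shows "0 \<le> matching_weight w S" "matching_weight w S \<le> n"
proof -
  have sub: "S \<subseteq> triples n" and card: "card S = n"
    using assms(1) by (auto simp: is_3dm_def)
  show "0 \<le> matching_weight w S"
    unfolding matching_weight_def using sub assms(2) by (intro sum_nonneg) auto
  have "matching_weight w S \<le> (\<Sum>T\<in>S. 1)"
    unfolding matching_weight_def using sub assms(2) by (intro sum_mono) auto
  then show "matching_weight w S \<le> n"
    using card by simp
qed

lemma improving_run_length_le_if_no_small_gain:
  assumes run: "improving_run n p q w ss k" and unit: "\<forall>T\<in>triples n. w T \<in> {0..1}"
    and no_small_gain: "\<forall>(A, B)\<in>moves n p. \<not> (0 < gain A B w \<and> gain A B w \<le> \<epsilon>)"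
  shows "real k * \<epsilon> \<le> n"
proof -
  have "matching_weight w (ss 0) + real i * \<epsilon> \<le> matching_weight w (ss i)" if "i \<le> k" for i
    using that
  proof (induction i)
    case 0
    then show ?case by simp
  next
    case (Suc i)
    have "is_3dm n (ss i)" "pq_neighbour n p q (ss i) (ss (Suc i))"
      "matching_weight w (ss i) < matching_weight w (ss (Suc i))"
      using improving_run_is_3dm[OF run] run Suc.prems by (auto simp: improving_run_def)
    from improving_step_is_move[OF this]
    have "matching_weight w (ss i) + \<epsilon> < matching_weight w (ss (Suc i))"
      using no_small_gain \<open>matching_weight w (ss i) < _\<close> by fastforce
    then show ?case
      using Suc by (simp add: algebra_simps)
  qed
  then have "matching_weight w (ss 0) + real k * \<epsilon> \<le> matching_weight w (ss k)"
    by simp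
  then show ?thesis
    using matching_weight_bounds[OF improving_run_is_3dm[OF run] unit] by fastforce
qed

lemma diagonal_is_3dm: "is_3dm n ((\<lambda>i. (i, i, i)) ` {0..<n})"
proof -
  have "card ((\<lambda>i. (i, i, i)) ` {0..<n}) = n"
    by (subst card_image) (auto simp: inj_on_def)
  then show ?thesis
    unfolding is_3dm_def triples_def by force
qed

lemma max_iterations_attained: "\<exists>ss. improving_run n p q w ss (max_iterations n p q w)"
proof -
  let ?K = "{k. \<exists>ss. improving_run n p q w ss k}"
  have "?K \<subseteq> {..<2 ^ (n ^ 3)}"
    using improving_run_length_less by blast
  then have "finite ?K"
    using finite_subset by blast
  moreover have "0 \<in> ?K"
    using diagonal_is_3dm[of n] unfolding improving_run_def by auto
  ultimately have "Max ?K \<in> ?K"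
    by (intro Max_in) auto
  then show ?thesis
    unfolding max_iterations_def by simp
qed

lemma max_iterations_less: "max_iterations n p q w < 2 ^ (n ^ 3)"
  using max_iterations_attained improving_run_length_less by blast

lemma le_dyadic_sum:
  fixes K :: nat
  assumes "K \<le> 2 ^ L"
  shows "K \<le> 1 + (\<Sum>j<L. 2 ^ j * (if 2 ^ j < K then 1 else 0))"
  using assms
proof (induction L arbitrary: K)
  case 0
  then show ?case by simp
next
  case (Suc L)
  show ?case
  proof (cases "K \<le> 2 ^ L")
    case True
    then show ?thesis
      using Suc.IH by simp
  next
    case False
    have "2 ^ j < K" if "j < Suc L" for j
      using False power_increasing[of j L "2::nat"] that by linarith
    then have "(\<Sum>j<Suc L. 2 ^ j * (if 2 ^ j < K then 1 else 0)) = (\<Sum>j<Suc L. (2::nat) ^ j)"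
      by (intro sum.cong) auto
    also have "\<dots> = 2 ^ Suc L - 1"
      using sum_power2 by (simp add: atLeast0LessThan)
    finally show ?thesis
      using Suc.prems by simp
  qed
qed

section \<open>Smoothed weights\<close>

text \<open>Outside I the uniform distribution on [0, 1] is used, so that the coordinate measures
  form a family of probability spaces; a product over I does not depend on this choice.\<close>
definition coordinate_measure :: "('i \<Rightarrow> real \<Rightarrow> real) \<Rightarrow> 'i set \<Rightarrow> 'i \<Rightarrow> real measure" where
  "coordinate_measure f I i =
     density lborel (\<lambda>x. ennreal (if i \<in> I then f i x else indicator {0..1} x))"

lemma sets_coordinate_measure [simp, measurable_cong]: "sets (coordinate_measure f I i) = sets borel"
  by (simp add: coordinate_measure_def)

lemma space_coordinate_measure [simp]: "space (coordinate_measure f I i) = UNIV"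
  by (simp add: coordinate_measure_def)

lemma smoothed_weights_eq_PiM:
  "smoothed_weights n f = PiM (triples n) (coordinate_measure f (triples n))"
  unfolding smoothed_weights_def coordinate_measure_def by (intro PiM_cong) auto

lemma prob_space_coordinate_measure:
  assumes "\<forall>T\<in>I. valid_density \<phi> (f T)"
  shows "prob_space (coordinate_measure f I i)"
proof (rule prob_spaceI)
  let ?g = "\<lambda>x. ennreal (if i \<in> I then f i x else indicator {0..1} x)"
  have "?g \<in> borel_measurable borel" "(\<integral>\<^sup>+ x. ?g x \<partial>lborel) = 1"
    using assms by (cases "i \<in> I"; simp add: valid_density_def ennreal_indicator)+
  then show "emeasure (coordinate_measure f I i) (space (coordinate_measure f I i)) = 1"
    unfolding coordinate_measure_def by (subst emeasure_density) auto
qed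

lemma prob_space_PiM_coordinate_measure:
  "\<forall>T\<in>I. valid_density \<phi> (f T) \<Longrightarrow> prob_space (PiM J (coordinate_measure f I))"
  by (intro prob_space_PiM prob_space_coordinate_measure) auto

lemma measurable_coordinate:
  "T \<in> I \<Longrightarrow> (\<lambda>w. w T) \<in> borel_measurable (PiM I (coordinate_measure f J))"
  using measurable_component_singleton[of T I "coordinate_measure f J"]
  by (simp add: measurable_cong_sets[OF refl sets_coordinate_measure[symmetric]])

lemma measurable_gain:
  "A \<subseteq> I \<Longrightarrow> B \<subseteq> I \<Longrightarrow> gain A B \<in> borel_measurable (PiM I (coordinate_measure f J))"
  unfolding gain_def using measurable_coordinate[of _ I f J]
  by (intro borel_measurable_diff borel_measurable_sum) auto

lemma valid_density_bound_ge_1: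
  assumes "valid_density \<phi> g"
  shows "1 \<le> \<phi>"
proof -
  have "ennreal 1 = (\<integral>\<^sup>+ x. ennreal (g x) \<partial>lborel)"
    using assms by (simp add: valid_density_def)
  also have "\<dots> \<le> (\<integral>\<^sup>+ x. ennreal \<phi> * indicator {0..1::real} x \<partial>lborel)"
    using assms
    by (intro nn_integral_mono) (auto simp: valid_density_def indicator_def intro!: ennreal_leI)
  also have "\<dots> = ennreal \<phi>"
    by (simp add: nn_integral_cmult_indicator)
  finally show ?thesis
    by (simp add: ennreal_le_iff2)
qed

lemma emeasure_PiM_le_section_bound:
  assumes val: "\<forall>T\<in>I. valid_density \<phi> (f T)" and "finite I" "T \<in> I"
    and E: "E \<in> sets (PiM I (coordinate_measure f I))"
    and slice: "\<And>x. x \<in> space (PiM (I - {T}) (coordinate_measure f I)) \<Longrightarrow>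
      (\<integral>\<^sup>+y. ennreal (f T y) * indicator E (x(T := y)) \<partial>lborel) \<le> c"
  shows "emeasure (PiM I (coordinate_measure f I)) E \<le> c"
proof -
  let ?M = "coordinate_measure f I" and ?J = "I - {T}"
  interpret product_sigma_finite ?M
    unfolding product_sigma_finite_def
    using prob_space_coordinate_measure[OF val] prob_space_imp_sigma_finite by blast
  interpret J: prob_space "PiM ?J ?M"
    using prob_space_PiM_coordinate_measure[OF val] .
  have I: "insert T ?J = I"
    using \<open>T \<in> I\<close> by blast
  have "(\<integral>\<^sup>+y. indicator E (x(T := y)) \<partial>?M T) \<le> c" if x: "x \<in> space (PiM ?J ?M)" for x
  proof -
    have "(\<lambda>y. x(T := y)) \<in> measurable (?M T) (PiM I ?M)"
      using measurable_component_update[OF x, of T] I by simp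
    then have "(\<lambda>y. indicator E (x(T := y)) :: ennreal) \<in> borel_measurable lborel"
      using measurable_compose[OF _ borel_measurable_indicator[OF E]]
      by (simp add: measurable_cong_sets[OF sets_coordinate_measure refl])
    then have "(\<integral>\<^sup>+y. indicator E (x(T := y)) \<partial>?M T)
        = (\<integral>\<^sup>+y. ennreal (f T y) * indicator E (x(T := y)) \<partial>lborel)"
      using val \<open>T \<in> I\<close> unfolding coordinate_measure_def
      by (subst nn_integral_density) (auto simp: valid_density_def)
    then show ?thesis
      using slice[OF x] by simp
  qed
  then have "(\<integral>\<^sup>+x. (\<integral>\<^sup>+y. indicator E (x(T := y)) \<partial>?M T) \<partial>PiM ?J ?M) \<le> (\<integral>\<^sup>+x. c \<partial>PiM ?J ?M)"
    by (intro nn_integral_mono) auto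
  also have "\<dots> = c"
    by (simp add: J.emeasure_space_1)
  moreover have "(\<integral>\<^sup>+x. (\<integral>\<^sup>+y. indicator E (x(T := y)) \<partial>?M T) \<partial>PiM ?J ?M)
      = emeasure (PiM I ?M) E"
    using product_nn_integral_insert[of ?J T "indicator E"] E I \<open>finite I\<close> by simp
  ultimately show ?thesis
    by simp
qed

lemma emeasure_small_gain_le:
  assumes val: "\<forall>T\<in>I. valid_density \<phi> (f T)" and "finite I"
    and AB: "A \<subseteq> I" "B \<subseteq> I" "A \<inter> B = {}" "B \<noteq> {}" and "0 \<le> \<epsilon>"
  shows "emeasure (PiM I (coordinate_measure f I))
           {w \<in> space (PiM I (coordinate_measure f I)). 0 < gain A B w \<and> gain A B w \<le> \<epsilon>}
         \<le> ennreal (\<phi> * \<epsilon>)"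
proof -
  obtain T where "T \<in> B"
    using AB by blast
  then have T: "T \<in> I" "T \<notin> A"
    using AB by auto
  have "finite B"
    using AB \<open>finite I\<close> finite_subset by blast
  define rest where "rest x = (\<Sum>t\<in>B - {T}. x t) - (\<Sum>t\<in>A. x t)" for x :: "'a \<Rightarrow> real"
  have gain_update: "gain A B (x(T := y)) = y + rest x" for x y
  proof -
    have "(\<Sum>t\<in>B - {T}. (x(T := y)) t) = (\<Sum>t\<in>B - {T}. x t)"
      by (intro sum.cong) auto
    moreover have "(\<Sum>t\<in>A. (x(T := y)) t) = (\<Sum>t\<in>A. x t)"
      using \<open>T \<notin> A\<close> by (intro sum.cong) auto
    ultimately show ?thesis
      unfolding gain_def rest_def sum.remove[OF \<open>finite B\<close> \<open>T \<in> B\<close>] by simp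
  qed
  show ?thesis
  proof (rule emeasure_PiM_le_section_bound[OF val \<open>finite I\<close> T(1)])
    show "{w \<in> space (PiM I (coordinate_measure f I)). 0 < gain A B w \<and> gain A B w \<le> \<epsilon>}
        \<in> sets (PiM I (coordinate_measure f I))"
      using measurable_gain[OF AB(1,2)] by measurable
    fix x
    have "ennreal (f T y) * indicator {w \<in> space (PiM I (coordinate_measure f I)).
            0 < gain A B w \<and> gain A B w \<le> \<epsilon>} (x(T := y))
        \<le> ennreal \<phi> * indicator {- rest x <.. \<epsilon> - rest x} y" for y
      using val T(1) gain_update[of x y]
      by (auto simp: indicator_def valid_density_def intro!: ennreal_leI)
    then have "(\<integral>\<^sup>+y. ennreal (f T y) * indicator {w \<in> space (PiM I (coordinate_measure f I)).
            0 < gain A B w \<and> gain A B w \<le> \<epsilon>} (x(T := y)) \<partial>lborel)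
        \<le> (\<integral>\<^sup>+y. ennreal \<phi> * indicator {- rest x <.. \<epsilon> - rest x} y \<partial>lborel)"
      by (intro nn_integral_mono) auto
    also have "\<dots> = ennreal (\<phi> * \<epsilon>)"
      using \<open>0 \<le> \<epsilon>\<close> valid_density_bound_ge_1[of \<phi> "f T"] val T(1)
      by (simp add: nn_integral_cmult_indicator ennreal_mult)
    finally show "(\<integral>\<^sup>+y. ennreal (f T y) * indicator {w \<in> space (PiM I (coordinate_measure f I)).
            0 < gain A B w \<and> gain A B w \<le> \<epsilon>} (x(T := y)) \<partial>lborel) \<le> ennreal (\<phi> * \<epsilon>)" .
  qed
qed

lemma outside_unit_interval_null:
  assumes val: "\<forall>T\<in>I. valid_density \<phi> (f T)" and "finite I" "T \<in> I"
  shows "{w \<in> space (PiM I (coordinate_measure f I)). w T \<notin> {0..1}}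
           \<in> null_sets (PiM I (coordinate_measure f I))"
proof -
  let ?E = "{w \<in> space (PiM I (coordinate_measure f I)). w T \<notin> {0..1}}"
  have E: "?E \<in> sets (PiM I (coordinate_measure f I))"
    using measurable_coordinate[OF \<open>T \<in> I\<close>] by measurable
  have "emeasure (PiM I (coordinate_measure f I)) ?E \<le> 0"
  proof (rule emeasure_PiM_le_section_bound[OF val \<open>finite I\<close> \<open>T \<in> I\<close> E])
    fix x
    have "(\<lambda>y. ennreal (f T y) * indicator ?E (x(T := y))) = (\<lambda>_. 0)"
      using val \<open>T \<in> I\<close> by (intro ext) (auto simp: indicator_def valid_density_def)
    then show "(\<integral>\<^sup>+y. ennreal (f T y) * indicator ?E (x(T := y)) \<partial>lborel) \<le> 0"
      by simp
  qed
  then show ?thesis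
    using E by auto
qed

section \<open>The expected number of iterations\<close>

definition bad_weights :: "nat \<Rightarrow> nat \<Rightarrow> real \<Rightarrow> (triple \<Rightarrow> real) set" where
  "bad_weights n p \<epsilon> = {w. (\<exists>(A, B)\<in>moves n p. 0 < gain A B w \<and> gain A B w \<le> \<epsilon>) \<or>
                           (\<exists>T\<in>triples n. w T \<notin> {0..1})}"

lemma max_iterations_le_unless_bad:
  assumes "w \<notin> bad_weights n p \<epsilon>"
  shows "real (max_iterations n p q w) * \<epsilon> \<le> n"
proof -
  obtain ss where "improving_run n p q w ss (max_iterations n p q w)"
    using max_iterations_attained by blast
  then show ?thesis
    using assms unfolding bad_weights_def by (intro improving_run_length_le_if_no_small_gain) auto
qed

lemma max_iterations_le_dyadic_sum:
  assumes "1 \<le> n"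
  shows "real (max_iterations n p q w)
           \<le> 1 + (\<Sum>j<n ^ 3. 2 ^ j * indicator (bad_weights n p (n / 2 ^ j)) w)"
proof -
  define K where "K = max_iterations n p q w"
  have "K \<le> 2 ^ (n ^ 3)"
    using max_iterations_less less_imp_le unfolding K_def by blast
  then have "real K \<le> real (1 + (\<Sum>j<n ^ 3. 2 ^ j * (if 2 ^ j < K then 1 else 0)))"
    using le_dyadic_sum of_nat_mono by blast
  also have "\<dots> = 1 + (\<Sum>j<n ^ 3. 2 ^ j * (if 2 ^ j < K then 1 else 0 :: real))"
    unfolding of_nat_add of_nat_sum by (auto intro!: sum.cong)
  also have "\<dots> \<le> 1 + (\<Sum>j<n ^ 3. 2 ^ j * indicator (bad_weights n p (n / 2 ^ j)) w)"
  proof (intro add_left_mono sum_mono mult_left_mono)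
    fix j :: nat
    have "w \<in> bad_weights n p (n / 2 ^ j)" if "2 ^ j < K"
    proof (rule ccontr)
      assume "w \<notin> bad_weights n p (n / 2 ^ j)"
      then have "real K * (n / 2 ^ j) \<le> n"
        unfolding K_def by (rule max_iterations_le_unless_bad)
      then have "real K \<le> 2 ^ j"
        using assms by (simp add: field_simps)
      with that show False
        by (metis not_le of_nat_le_iff of_nat_numeral of_nat_power)
    qed
    then show "(if 2 ^ j < K then 1 else 0 :: real) \<le> indicator (bad_weights n p (n / 2 ^ j)) w"
      by simp
  qed simp
  finally show ?thesis
    unfolding K_def .
qed

lemma emeasure_bad_weights_le:
  assumes val: "\<forall>T\<in>triples n. valid_density \<phi> (f T)" and "0 \<le> \<epsilon>"
  defines "M \<equiv> smoothed_weights n f"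
  shows "bad_weights n p \<epsilon> \<inter> space M \<in> sets M"
    and "emeasure M (bad_weights n p \<epsilon> \<inter> space M) \<le> ennreal (real (card (moves n p)) * (\<phi> * \<epsilon>))"
proof -
  define small_gain where
    "small_gain m = {w \<in> space M. 0 < gain (fst m) (snd m) w \<and> gain (fst m) (snd m) w \<le> \<epsilon>}"
    for m :: "triple set \<times> triple set"
  define outside where "outside T = {w \<in> space M. w T \<notin> {0..1}}" for T
  have M: "M = PiM (triples n) (coordinate_measure f (triples n))"
    unfolding M_def by (rule smoothed_weights_eq_PiM)
  have bad: "bad_weights n p \<epsilon> \<inter> space M = (\<Union>m\<in>moves n p. small_gain m) \<union> (\<Union>T\<in>triples n. outside T)"
    unfolding bad_weights_def small_gain_def outside_def by auto
  have small_gain: "small_gain m \<in> sets M"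
    "emeasure M (small_gain m) \<le> ennreal (\<phi> * \<epsilon>)" if "m \<in> moves n p" for m
  proof -
    obtain A B where m: "m = (A, B)"
      by fastforce
    with that have AB: "A \<subseteq> triples n" "B \<subseteq> triples n" "A \<inter> B = {}" "B \<noteq> {}"
      unfolding moves_def by auto
    show "small_gain m \<in> sets M"
      using measurable_gain[OF AB(1,2)] unfolding small_gain_def M m fst_conv snd_conv by measurable
    show "emeasure M (small_gain m) \<le> ennreal (\<phi> * \<epsilon>)"
      using emeasure_small_gain_le[OF val finite_triples AB \<open>0 \<le> \<epsilon>\<close>]
      unfolding small_gain_def M m by simp
  qed
  have "(\<Union>T\<in>triples n. outside T) \<in> null_sets M"
    using outside_unit_interval_null[OF val] unfolding outside_def M
    by (intro null_sets.finite_UN) auto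
  moreover have small_gains: "(\<Union>m\<in>moves n p. small_gain m) \<in> sets M"
    using small_gain finite_moves by blast
  ultimately show "bad_weights n p \<epsilon> \<inter> space M \<in> sets M"
    unfolding bad by blast
  have "emeasure M (bad_weights n p \<epsilon> \<inter> space M) = emeasure M (\<Union>m\<in>moves n p. small_gain m)"
    unfolding bad using small_gains \<open>_ \<in> null_sets M\<close> by (rule emeasure_Un_null_set)
  also have "\<dots> \<le> (\<Sum>m\<in>moves n p. emeasure M (small_gain m))"
    using small_gain finite_moves by (intro emeasure_subadditive_finite) auto
  also have "\<dots> \<le> (\<Sum>m\<in>moves n p. ennreal (\<phi> * \<epsilon>))"
    using small_gain by (intro sum_mono) auto
  also have "\<dots> = ennreal (real (card (moves n p)) * (\<phi> * \<epsilon>))"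
    by (simp add: ennreal_of_nat_eq_real_of_nat ennreal_mult')
  finally show "emeasure M (bad_weights n p \<epsilon> \<inter> space M) \<le> ennreal (real (card (moves n p)) * (\<phi> * \<epsilon>))" .
qed

lemma nn_integral_max_iterations_le:
  assumes val: "\<forall>T\<in>triples n. valid_density \<phi> (f T)" and "1 \<le> n"
  shows "(\<integral>\<^sup>+w. ennreal (real (max_iterations n p q w)) \<partial>smoothed_weights n f)
           \<le> ennreal (1 + real n ^ 4 * real (card (moves n p)) * \<phi>)"
proof -
  define M where "M = smoothed_weights n f"
  define E where "E j = bad_weights n p (n / 2 ^ j) \<inter> space M" for j :: nat
  define c where "c = real (card (moves n p)) * (\<phi> * n)"
  interpret prob_space M
    unfolding M_def smoothed_weights_eq_PiM using val by (rule prob_space_PiM_coordinate_measure)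
  have "(0, 0, 0) \<in> triples n"
    using \<open>1 \<le> n\<close> by (simp add: triples_def)
  then have "1 \<le> \<phi>"
    using val valid_density_bound_ge_1 by blast
  then have "0 \<le> c"
    by (simp add: c_def)
  have E: "E j \<in> sets M" "ennreal (2 ^ j) * emeasure M (E j) \<le> ennreal c" for j
  proof -
    show "E j \<in> sets M"
      unfolding E_def M_def using emeasure_bad_weights_le(1)[OF val] by simp
    have "emeasure M (E j) \<le> ennreal (c / 2 ^ j)"
      using emeasure_bad_weights_le(2)[OF val, of "n / 2 ^ j" p]
      unfolding E_def M_def c_def by simp
    then have "ennreal (2 ^ j) * emeasure M (E j) \<le> ennreal (2 ^ j) * ennreal (c / 2 ^ j)"
      by (rule mult_left_mono) simp
    also have "\<dots> = ennreal c"
      by (simp add: ennreal_mult'[symmetric])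
    finally show "ennreal (2 ^ j) * emeasure M (E j) \<le> ennreal c" .
  qed
  have "(\<integral>\<^sup>+w. ennreal (real (max_iterations n p q w)) \<partial>M)
      \<le> (\<integral>\<^sup>+w. 1 + (\<Sum>j<n ^ 3. ennreal (2 ^ j) * indicator (E j) w) \<partial>M)"
  proof (rule nn_integral_mono)
    fix w assume "w \<in> space M"
    then have "(\<Sum>j<n ^ 3. 2 ^ j * indicator (bad_weights n p (n / 2 ^ j)) w)
        = (\<Sum>j<n ^ 3. 2 ^ j * indicator (E j) w :: real)"
      unfolding E_def by (intro sum.cong) (auto simp: indicator_def)
    then have "ennreal (real (max_iterations n p q w))
        \<le> ennreal (1 + (\<Sum>j<n ^ 3. 2 ^ j * indicator (E j) w))"
      using max_iterations_le_dyadic_sum[OF \<open>1 \<le> n\<close>, of p q w] by (intro ennreal_leI) linarith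
    also have "\<dots> = 1 + (\<Sum>j<n ^ 3. ennreal (2 ^ j) * indicator (E j) w)"
      by (simp add: sum_nonneg ennreal_mult' ennreal_indicator flip: sum_ennreal)
    finally show "ennreal (real (max_iterations n p q w))
        \<le> 1 + (\<Sum>j<n ^ 3. ennreal (2 ^ j) * indicator (E j) w)" .
  qed
  also have "\<dots> = 1 + (\<Sum>j<n ^ 3. ennreal (2 ^ j) * emeasure M (E j))"
  proof -
    have meas: "(\<lambda>w. ennreal (2 ^ j) * indicator (E j) w) \<in> borel_measurable M" for j
      using E(1) by simp
    have "(\<integral>\<^sup>+w. 1 + (\<Sum>j<n ^ 3. ennreal (2 ^ j) * indicator (E j) w) \<partial>M)
        = (\<integral>\<^sup>+w. 1 \<partial>M) + (\<integral>\<^sup>+w. (\<Sum>j<n ^ 3. ennreal (2 ^ j) * indicator (E j) w) \<partial>M)"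
      by (intro nn_integral_add borel_measurable_sum meas) simp
    also have "(\<integral>\<^sup>+w. (\<Sum>j<n ^ 3. ennreal (2 ^ j) * indicator (E j) w) \<partial>M)
        = (\<Sum>j<n ^ 3. (\<integral>\<^sup>+w. ennreal (2 ^ j) * indicator (E j) w \<partial>M))"
      using meas by (intro nn_integral_sum) auto
    also have "\<dots> = (\<Sum>j<n ^ 3. ennreal (2 ^ j) * emeasure M (E j))"
      using E(1) by (intro sum.cong refl nn_integral_cmult_indicator)
    finally show ?thesis
      by (simp add: emeasure_space_1)
  qed
  also have "\<dots> \<le> 1 + (\<Sum>j<n ^ 3. ennreal c)"
    using E(2) by (intro add_left_mono sum_mono) auto
  also have "\<dots> = ennreal (1 + real n ^ 3 * c)"
    using \<open>0 \<le> c\<close> by (simp add: ennreal_of_nat_eq_real_of_nat ennreal_mult')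
  also have "real n ^ 3 * c = real n ^ 4 * real (card (moves n p)) * \<phi>"
    by (simp add: c_def power3_eq_cube power4_eq_xxxx)
  finally show ?thesis
    unfolding M_def .
qed

lemma iteration_bound_le_poly:
  fixes \<phi> :: real
  assumes "1 \<le> n" "1 \<le> \<phi>"
  shows "1 + real n ^ 4 * real (card (moves n p)) * \<phi>
           \<le> (1 + real ((p + 1) ^ 2)) * real n ^ (6 * p + 6) * \<phi>"
proof -
  have "(n ^ (3 * p)) ^ 2 = n ^ (6 * p)"
    by (simp flip: power_mult)
  then have "card (moves n p) \<le> (p + 1) ^ 2 * n ^ (6 * p)"
    using card_moves_le[OF assms(1), of p] by (simp only: power_mult_distrib)
  then have "real (card (moves n p)) \<le> real ((p + 1) ^ 2) * real n ^ (6 * p)"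
    by (metis of_nat_le_iff of_nat_mult of_nat_power)
  then have "real n ^ 4 * real (card (moves n p)) * \<phi>
      \<le> real n ^ 4 * (real ((p + 1) ^ 2) * real n ^ (6 * p)) * \<phi>"
    using assms by (intro mult_right_mono mult_left_mono) auto
  also have "\<dots> = real ((p + 1) ^ 2) * real n ^ (6 * p + 4) * \<phi>"
    by (simp add: power_add)
  also have "\<dots> \<le> real ((p + 1) ^ 2) * real n ^ (6 * p + 6) * \<phi>"
    using assms by (intro mult_right_mono mult_left_mono power_increasing) auto
  moreover have "1 \<le> real n ^ (6 * p + 6) * \<phi>"
    using one_le_power[of "real n" "6 * p + 6"] mult_mono[of 1 "real n ^ (6 * p + 6)" 1 \<phi>] assms
    by simp
  ultimately show ?thesis
    by (simp add: algebra_simps)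
qed

theorem mainTheorem14:
  fixes p q :: nat
  shows "\<exists>C>0. \<forall>(n::nat) (\<phi>::real) (f::triple \<Rightarrow> real \<Rightarrow> real).
           (\<forall>T\<in>triples n. valid_density \<phi> (f T)) \<longrightarrow>
           (\<integral>\<^sup>+ w. ennreal (real (max_iterations n p q w)) \<partial>smoothed_weights n f)
             \<le> ennreal (C * real n ^ (6 * p + 6) * \<phi>)"
proof (intro exI[of _ "1 + real ((p + 1) ^ 2)"] conjI allI impI)
  fix n \<phi> f
  assume val: "\<forall>T\<in>triples n. valid_density \<phi> (f T)"
  show "(\<integral>\<^sup>+ w. ennreal (real (max_iterations n p q w)) \<partial>smoothed_weights n f)
          \<le> ennreal ((1 + real ((p + 1) ^ 2)) * real n ^ (6 * p + 6) * \<phi>)"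
  proof (cases "n = 0")
    case True
    then show ?thesis
      using max_iterations_less[of n p q] by simp
  next
    case False
    then have "(0, 0, 0) \<in> triples n"
      by (simp add: triples_def)
    then have "1 \<le> \<phi>"
      using val valid_density_bound_ge_1 by blast
    then show ?thesis
      using nn_integral_max_iterations_le[OF val] iteration_bound_le_poly[of n \<phi> p] False
      by (meson ennreal_leI less_one not_le order_trans)
  qed
qed (simp add: add_pos_nonneg)

end
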